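(* Let $X$ be a real random variable with $E(X^2)<\infty$ and distribution function $F$, and let $Y$ be a self-decomposable real random variable with $E(Y^2)<\infty$ and distribution function $G$, independent of $X$. For $\lambda\in\mathbb{R}$ let $F_\lambda$ be the distribution function of $X+\lambda Y$, and let $t_{n,\lambda}$ be the Pitman estimator of $\theta$ from a sample of size $n$ from $F_\lambda(x-\theta)$. Then $\lambda\mapsto\mathrm{var}(t_{n,\lambda})$ is increasing on $(0,\infty)$ and decreasing on $(-\infty,0)$.
   Context: A random variable $Y$ is self-decomposable if for every $c\in(0,1)$ there is a random variable $Z_c$ independent of $Y$ such that $Y$ has the same distribution as $cY+Z_c$. A sample of size $n$ from $H(x-\theta)$ ($\theta\in\mathbb{R}$ unknown) is $x_1,\ldots,x_n$ i.i.d. with $x_i-\theta\sim H$. An estimator $t$ is equivariant if $t(x_1+c,\ldots,x_n+c)=t(x_1,\ldots,x_n)+c$ for all $c$. The Pitman estimator is the equivariant estimator of minimal variance; it equals $\bar x-E_0(\bar x\mid x_1-\bar x,\ldots,x_n-\bar x)$, with $E_0$ expectation under $\theta=0$. *)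

theory Defs
  imports "HOL-Probability.Probability"
begin

text \<open>Self-decomposability of a distribution G on the reals: for every c in (0,1)
  there is a probability distribution Q (the law of Z_c, independent of Y) such that
  the law of Y equals the law of c*Y + Z_c, i.e. the convolution of the law of c*Y with Q.\<close>
definition self_decomposable :: "real measure \<Rightarrow> bool" where
  "self_decomposable G \<longleftrightarrow>
     (\<forall>c\<in>{0<..<1}. \<exists>Q. prob_space Q \<and> sets Q = sets borel \<and>
        G = (distr G borel (\<lambda>y. c * y) \<star> Q))"

definition sample_mean :: "nat \<Rightarrow> (nat \<Rightarrow> real) \<Rightarrow> real" where
  "sample_mean n x = (\<Sum>i<n. x i) / real n"

definition residuals :: "nat \<Rightarrow> (nat \<Rightarrow> real) \<Rightarrow> (nat \<Rightarrow> real)" where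
  "residuals n x = (\<lambda>i\<in>{..<n}. x i - sample_mean n x)"

text \<open>Law of a sample x_1..x_n of size n under theta = 0 (i.i.d. with law H).\<close>
definition sample_law :: "real measure \<Rightarrow> nat \<Rightarrow> (nat \<Rightarrow> real) measure" where
  "sample_law H n = PiM {..<n} (\<lambda>_. H)"

definition residual_algebra :: "real measure \<Rightarrow> nat \<Rightarrow> (nat \<Rightarrow> real) measure" where
  "residual_algebra H n =
     vimage_algebra (space (sample_law H n)) (residuals n) (PiM {..<n} (\<lambda>_. borel))"

definition pitman_estimator :: "real measure \<Rightarrow> nat \<Rightarrow> (nat \<Rightarrow> real) \<Rightarrow> real" where
  "pitman_estimator H n x =
     sample_mean n x - real_cond_exp (sample_law H n) (residual_algebra H n) (sample_mean n) x"

text \<open>Variance of the Pitman estimator (it does not depend on theta by equivariance;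
  computed under theta = 0).\<close>
definition pitman_var :: "real measure \<Rightarrow> nat \<Rightarrow> real" where
  "pitman_var H n =
     (let M = sample_law H n; t = pitman_estimator H n
      in (\<integral>x. (t x - (\<integral>y. t y \<partial>M))\<^sup>2 \<partial>M))"

end

theory Submission
  imports Defs
begin

text \<open>Self-decomposability of Y says that for 0 < c < 1 the law of X + kY is the law of
  X + ckY convolved with a further law (that of k Z_c). So it suffices that convolving a
  location law H with independent noise Q cannot decrease the variance of the Pitman estimator.
  That variance is the mean-square distance of the sample mean to the residual sigma-algebra,
  because conditional expectation is the best square-integrable predictor. A sample from
  H * Q is x + w with x a sample from H and w an independent sample from Q; for fixed w the
  optimal predictor for H * Q, evaluated at x + w and shifted by the mean of w, depends on x
  only through its residuals, so its error is at least the Pitman variance of H. Averaging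
  over w gives the inequality.\<close>

lemma square_integrable_mult:
  fixes a b :: "'a \<Rightarrow> real"
  assumes [measurable]: "a \<in> borel_measurable M" "b \<in> borel_measurable M"
    and "integrable M (\<lambda>x. (a x)\<^sup>2)" "integrable M (\<lambda>x. (b x)\<^sup>2)"
  shows "integrable M (\<lambda>x. a x * b x)"
proof (rule Bochner_Integration.integrable_bound)
  show "integrable M (\<lambda>x. (a x)\<^sup>2 + (b x)\<^sup>2)" using assms by simp
  show "AE x in M. norm (a x * b x) \<le> norm ((a x)\<^sup>2 + (b x)\<^sup>2)"
  proof (rule AE_I2)
    fix x
    have "2 * \<bar>a x * b x\<bar> \<le> (a x)\<^sup>2 + (b x)\<^sup>2"
      using zero_le_power2[of "\<bar>a x\<bar> - \<bar>b x\<bar>"] by (simp add: power2_diff abs_mult)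
    then show "norm (a x * b x) \<le> norm ((a x)\<^sup>2 + (b x)\<^sup>2)" by simp
  qed
qed simp

lemma square_integrable_add:
  fixes a b :: "'a \<Rightarrow> real"
  assumes [measurable]: "a \<in> borel_measurable M" "b \<in> borel_measurable M"
    and "integrable M (\<lambda>x. (a x)\<^sup>2)" "integrable M (\<lambda>x. (b x)\<^sup>2)"
  shows "integrable M (\<lambda>x. (a x + b x)\<^sup>2)"
proof -
  have "integrable M (\<lambda>x. (a x)\<^sup>2 + (b x)\<^sup>2 + 2 * (a x * b x))"
    using assms square_integrable_mult[of a M b] by simp
  then show ?thesis by (simp add: power2_sum mult.assoc)
qed

lemma square_integrable_diff:
  fixes a b :: "'a \<Rightarrow> real"
  assumes [measurable]: "a \<in> borel_measurable M" "b \<in> borel_measurable M"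
    and "integrable M (\<lambda>x. (a x)\<^sup>2)" "integrable M (\<lambda>x. (b x)\<^sup>2)"
  shows "integrable M (\<lambda>x. (a x - b x)\<^sup>2)"
  using square_integrable_add[of a M "\<lambda>x. - b x"] assms by simp

lemma square_integrable_sum:
  fixes f :: "'i \<Rightarrow> 'a \<Rightarrow> real"
  assumes "finite S" "\<And>i. i \<in> S \<Longrightarrow> f i \<in> borel_measurable M"
    "\<And>i. i \<in> S \<Longrightarrow> integrable M (\<lambda>x. (f i x)\<^sup>2)"
  shows "integrable M (\<lambda>x. (\<Sum>i\<in>S. f i x)\<^sup>2)"
  using assms
proof (induction S rule: finite_induct)
  case (insert j S)
  have "(\<lambda>x. \<Sum>i\<in>S. f i x) \<in> borel_measurable M"
    using insert.prems by (intro borel_measurable_sum) auto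
  with insert show ?case by (simp add: square_integrable_add)
qed simp

context finite_measure_subalgebra
begin

lemma square_integrable_real_cond_exp:
  assumes [measurable]: "f \<in> borel_measurable M" and f2: "integrable M (\<lambda>x. (f x)\<^sup>2)"
  shows "integrable M (\<lambda>x. (real_cond_exp M F f x)\<^sup>2)"
  by (rule integrable_convex_cond_exp[where I=UNIV])
     (use f2 square_integrable_imp_integrable[OF _ f2] convex_power2 in auto)

lemma real_cond_exp_orthogonal:
  assumes [measurable]: "f \<in> borel_measurable M" "d \<in> borel_measurable F"
    and f2: "integrable M (\<lambda>x. (f x)\<^sup>2)" and d2: "integrable M (\<lambda>x. (d x)\<^sup>2)"
  shows "(\<integral>x. (f x - real_cond_exp M F f x) * d x \<partial>M) = 0"
proof -
  have [measurable]: "d \<in> borel_measurable M" by (rule measurable_from_subalg[OF subalg]) simp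
  have df: "integrable M (\<lambda>x. d x * f x)" by (rule square_integrable_mult) (use f2 d2 in auto)
  have dc: "integrable M (\<lambda>x. d x * real_cond_exp M F f x)"
    by (rule square_integrable_mult) (use d2 square_integrable_real_cond_exp[OF _ f2] in auto)
  have "(\<integral>x. d x * real_cond_exp M F f x \<partial>M) = (\<integral>x. d x * f x \<partial>M)"
    by (rule real_cond_exp_intg(2)) (use df in auto)
  then show ?thesis using df dc by (simp add: algebra_simps)
qed

lemma real_cond_exp_least_squares:
  assumes [measurable]: "f \<in> borel_measurable M" "h \<in> borel_measurable F"
    and f2: "integrable M (\<lambda>x. (f x)\<^sup>2)"
  shows "(\<integral>\<^sup>+x. ennreal ((f x - real_cond_exp M F f x)\<^sup>2) \<partial>M)
           \<le> (\<integral>\<^sup>+x. ennreal ((f x - h x)\<^sup>2) \<partial>M)"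
proof (cases "(\<integral>\<^sup>+x. ennreal ((f x - h x)\<^sup>2) \<partial>M) = \<infinity>")
  case False
  define c where "c = real_cond_exp M F f"
  define d where "d x = c x - h x" for x
  have [measurable]: "h \<in> borel_measurable M" by (rule measurable_from_subalg[OF subalg]) simp
  have [measurable]: "c \<in> borel_measurable F" "c \<in> borel_measurable M"
    "d \<in> borel_measurable F" "d \<in> borel_measurable M"
    unfolding c_def d_def by auto
  have fh2: "integrable M (\<lambda>x. (f x - h x)\<^sup>2)"
    using False by (intro integrableI_nonneg) (auto simp: top.not_eq_extremum)
  have fc2: "integrable M (\<lambda>x. (f x - c x)\<^sup>2)"
    unfolding c_def by (rule square_integrable_diff) (use f2 square_integrable_real_cond_exp[OF _ f2] in auto)
  have "integrable M (\<lambda>x. ((f x - h x) - (f x - c x))\<^sup>2)"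
    by (rule square_integrable_diff) (use fh2 fc2 in auto)
  then have d2: "integrable M (\<lambda>x. (d x)\<^sup>2)" by (simp add: d_def)
  have cross: "integrable M (\<lambda>x. (f x - c x) * d x)" by (rule square_integrable_mult) (use fc2 d2 in auto)
  have "(\<integral>x. (f x - c x)\<^sup>2 \<partial>M) \<le> (\<integral>x. (f x - c x)\<^sup>2 + 2 * ((f x - c x) * d x) + (d x)\<^sup>2 \<partial>M)"
    using fc2 cross d2 real_cond_exp_orthogonal[OF _ _ f2 d2] by (simp add: c_def)
  also have "\<dots> = (\<integral>x. (f x - h x)\<^sup>2 \<partial>M)"
    by (rule Bochner_Integration.integral_cong) (auto simp: d_def power2_eq_square algebra_simps)
  finally show ?thesis
    using fc2 fh2 by (simp add: c_def nn_integral_eq_integral)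
qed simp

end

lemma measurable_sample_mean [measurable]:
  "sample_mean n \<in> borel_measurable (PiM {..<n} (\<lambda>_. borel))"
  unfolding sample_mean_def by measurable

lemma measurable_residuals [measurable]:
  "residuals n \<in> PiM {..<n} (\<lambda>_. borel) \<rightarrow>\<^sub>M PiM {..<n} (\<lambda>_. borel)"
  unfolding residuals_def by measurable

lemma sets_sample_law:
  "sets H = sets borel \<Longrightarrow> sets (sample_law H n) = sets (PiM {..<n} (\<lambda>_. borel))"
  unfolding sample_law_def by (rule sets_PiM_cong) auto

lemma space_sample_law:
  "sets H = sets borel \<Longrightarrow> space (sample_law H n) = PiE {..<n} (\<lambda>_. UNIV)"
  using sets_eq_imp_space_eq[OF sets_sample_law] by (simp add: space_PiM)

lemma prob_space_sample_law: "prob_space H \<Longrightarrow> prob_space (sample_law H n)"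
  unfolding sample_law_def by (rule prob_space_PiM) auto

lemma residual_algebra_eq_vimage_algebra:
  "sets H = sets borel \<Longrightarrow>
    residual_algebra H n = vimage_algebra (PiE {..<n} (\<lambda>_. UNIV)) (residuals n) (PiM {..<n} (\<lambda>_. borel))"
  unfolding residual_algebra_def by (simp add: space_sample_law)

lemma finite_measure_subalgebra_residual_algebra:
  assumes "prob_space H" and sH: "sets H = sets borel"
  shows "finite_measure_subalgebra (sample_law H n) (residual_algebra H n)"
proof -
  have m: "residuals n \<in> sample_law H n \<rightarrow>\<^sub>M PiM {..<n} (\<lambda>_. borel)"
    by (simp add: measurable_cong_sets[OF sets_sample_law[OF sH] refl])
  have "subalgebra (sample_law H n) (residual_algebra H n)"
    unfolding subalgebra_def residual_algebra_def
    using m measurable_space[OF m] by (subst sets_vimage_algebra2) (auto simp: measurable_sets)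
  then show ?thesis
    using prob_space.finite_measure[OF prob_space_sample_law[OF assms(1)]]
    by (simp add: finite_measure_subalgebra_def finite_measure_subalgebra_axioms_def)
qed

definition square_integrable_law :: "real measure \<Rightarrow> bool" where
  "square_integrable_law H \<longleftrightarrow> prob_space H \<and> sets H = sets borel \<and> integrable H (\<lambda>x. x\<^sup>2)"

lemma square_integrable_sample_mean:
  assumes "square_integrable_law H"
  shows "integrable (sample_law H n) (\<lambda>x. (sample_mean n x)\<^sup>2)"
proof -
  have H: "prob_space H" and sH[measurable_cong]: "sets H = sets borel" and H2: "integrable H (\<lambda>x. x\<^sup>2)"
    using assms by (auto simp: square_integrable_law_def)
  have component: "integrable (sample_law H n) (\<lambda>x. (x i)\<^sup>2)" if "i < n" for i
  proof -
    have "distr (sample_law H n) H (\<lambda>x. x i) = H"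
      unfolding sample_law_def by (rule distr_PiM_component) (use H that in auto)
    moreover have "(\<lambda>x. x i) \<in> sample_law H n \<rightarrow>\<^sub>M H"
      unfolding sample_law_def using that by (intro measurable_component_singleton) auto
    ultimately show ?thesis using H2 integrable_distr_eq[of "\<lambda>x. x i" "sample_law H n" H "\<lambda>x. x\<^sup>2"] by simp
  qed
  have "integrable (sample_law H n) (\<lambda>x. (\<Sum>i<n. x i)\<^sup>2)"
    by (rule square_integrable_sum) (auto simp: component measurable_cong_sets[OF sets_sample_law[OF sH] refl])
  then have "integrable (sample_law H n) (\<lambda>x. (\<Sum>i<n. x i)\<^sup>2 / (real n)\<^sup>2)"
    by (rule integrable_divide_zero)
  then show ?thesis unfolding sample_mean_def power_divide .
qed

text \<open>The Pitman estimator has mean zero, since conditional expectation preserves the mean.\<close>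

lemma pitman_var_eq_nn_integral:
  assumes "square_integrable_law H"
  shows "ennreal (pitman_var H n) = (\<integral>\<^sup>+x. ennreal ((sample_mean n x -
     real_cond_exp (sample_law H n) (residual_algebra H n) (sample_mean n) x)\<^sup>2) \<partial>sample_law H n)"
proof -
  have H: "prob_space H" and sH: "sets H = sets borel"
    using assms by (auto simp: square_integrable_law_def)
  define P where "P = sample_law H n"
  define c where "c = real_cond_exp P (residual_algebra H n) (sample_mean n)"
  interpret finite_measure_subalgebra P "residual_algebra H n"
    unfolding P_def by (rule finite_measure_subalgebra_residual_algebra[OF H sH])
  have [measurable]: "sample_mean n \<in> borel_measurable P"
    unfolding P_def measurable_cong_sets[OF sets_sample_law[OF sH] refl] by simp
  have [measurable]: "c \<in> borel_measurable P"
    unfolding c_def by (rule measurable_from_subalg[OF subalg]) simp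
  have f2: "integrable P (\<lambda>x. (sample_mean n x)\<^sup>2)"
    unfolding P_def by (rule square_integrable_sample_mean[OF assms])
  have fi: "integrable P (sample_mean n)" by (rule square_integrable_imp_integrable) (use f2 in auto)
  have centred: "(\<integral>y. sample_mean n y - c y \<partial>P) = 0"
    using fi real_cond_exp_int[OF fi] by (simp add: c_def)
  have "integrable P (\<lambda>x. (sample_mean n x - c x)\<^sup>2)"
    by (rule square_integrable_diff) (use f2 square_integrable_real_cond_exp[OF _ f2] in \<open>auto simp: c_def\<close>)
  moreover have "pitman_var H n = (\<integral>x. (sample_mean n x - c x)\<^sup>2 \<partial>P)"
    using centred unfolding pitman_var_def Let_def pitman_estimator_def c_def P_def by simp
  ultimately show ?thesis by (simp add: nn_integral_eq_integral P_def c_def)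
qed

lemma pitman_var_le_residual_predictor:
  assumes "square_integrable_law H" and "h \<in> borel_measurable (residual_algebra H n)"
  shows "ennreal (pitman_var H n) \<le> (\<integral>\<^sup>+x. ennreal ((sample_mean n x - h x)\<^sup>2) \<partial>sample_law H n)"
proof -
  have H: "prob_space H" and sH: "sets H = sets borel"
    using assms by (auto simp: square_integrable_law_def)
  interpret finite_measure_subalgebra "sample_law H n" "residual_algebra H n"
    by (rule finite_measure_subalgebra_residual_algebra[OF H sH])
  show ?thesis
    unfolding pitman_var_eq_nn_integral[OF assms(1)]
    by (rule real_cond_exp_least_squares)
       (use assms(2) square_integrable_sample_mean[OF assms(1)] in
        \<open>auto simp: measurable_cong_sets[OF sets_sample_law[OF sH] refl]\<close>)
qed

lemma pitman_var_nonneg: "0 \<le> pitman_var H n"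
  unfolding pitman_var_def Let_def by (rule integral_nonneg_AE) simp

definition sample_add :: "nat \<Rightarrow> (nat \<Rightarrow> real) \<Rightarrow> (nat \<Rightarrow> real) \<Rightarrow> (nat \<Rightarrow> real)" where
  "sample_add n x w = (\<lambda>i\<in>{..<n}. x i + w i)"

lemma measurable_sample_add [measurable]:
  "(\<lambda>p. sample_add n (fst p) (snd p))
     \<in> PiM {..<n} (\<lambda>_. borel) \<Otimes>\<^sub>M PiM {..<n} (\<lambda>_. borel) \<rightarrow>\<^sub>M PiM {..<n} (\<lambda>_. borel)"
  unfolding sample_add_def by measurable

lemma measurable_sample_add_const [measurable]:
  "(\<lambda>x. sample_add n x w) \<in> PiM {..<n} (\<lambda>_. borel) \<rightarrow>\<^sub>M PiM {..<n} (\<lambda>_. borel)"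
  unfolding sample_add_def by measurable

lemma sample_mean_sample_add: "sample_mean n (sample_add n x w) = sample_mean n x + sample_mean n w"
  unfolding sample_mean_def sample_add_def by (simp add: sum.distrib add_divide_distrib)

lemma residuals_sample_add: "residuals n (sample_add n x w) = sample_add n (residuals n x) (residuals n w)"
  unfolding residuals_def sample_mean_sample_add by (rule ext) (simp add: sample_add_def)

lemma measurable_sample_add_residual_algebra:
  assumes "sets H = sets borel" and "sets B = sets borel"
  shows "(\<lambda>x. sample_add n x w) \<in> residual_algebra H n \<rightarrow>\<^sub>M residual_algebra B n"
proof -
  let ?R = "vimage_algebra (PiE {..<n} (\<lambda>_. UNIV)) (residuals n) (PiM {..<n} (\<lambda>_. borel))"
  have "residuals n \<in> ?R \<rightarrow>\<^sub>M PiM {..<n} (\<lambda>_. borel)"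
    by (rule measurable_vimage_algebra1) (auto simp: space_PiM residuals_def)
  then have "(\<lambda>x. residuals n (sample_add n x w)) \<in> ?R \<rightarrow>\<^sub>M PiM {..<n} (\<lambda>_. borel)"
    unfolding residuals_sample_add by measurable
  then show ?thesis
    unfolding residual_algebra_eq_vimage_algebra[OF assms(1)] residual_algebra_eq_vimage_algebra[OF assms(2)]
    by (intro measurable_vimage_algebra2) (auto simp: sample_add_def)
qed

lemma emeasure_sample_add_preimage:
  assumes "prob_space Q" and sQ: "sets Q = sets borel"
    and A: "\<And>i. i < n \<Longrightarrow> A i \<in> sets borel"
  shows "emeasure (sample_law Q n) {w \<in> space (sample_law Q n). sample_add n x w \<in> PiE {..<n} A}
           = (\<Prod>i<n. \<integral>\<^sup>+s. indicator (A i) (x i + s) \<partial>Q)"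
proof -
  interpret product_sigma_finite "\<lambda>_. Q"
    by (simp add: product_sigma_finite_def prob_space_imp_sigma_finite[OF assms(1)])
  have preimage: "{w \<in> space (sample_law Q n). sample_add n x w \<in> PiE {..<n} A}
          = PiE {..<n} (\<lambda>i. (\<lambda>s. x i + s) -` A i)"
    by (auto simp: space_sample_law[OF sQ] sample_add_def PiE_iff extensional_def)
  have shifted: "(\<lambda>s. x i + s) -` A i \<in> sets Q" if "i < n" for i
    using measurable_sets[OF _ A[OF that], of "\<lambda>s. x i + s" borel] by (simp add: sQ)
  have "emeasure (sample_law Q n) {w \<in> space (sample_law Q n). sample_add n x w \<in> PiE {..<n} A}
          = (\<Prod>i<n. emeasure Q ((\<lambda>s. x i + s) -` A i))"
    unfolding preimage unfolding sample_law_def by (rule emeasure_PiM) (auto simp: shifted)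
  also have "\<dots> = (\<Prod>i<n. \<integral>\<^sup>+s. indicator (A i) (x i + s) \<partial>Q)"
    using shifted by (intro prod.cong) (simp_all flip: nn_integral_indicator add: indicator_def)
  finally show ?thesis .
qed

lemma measurable_sample_add_sample_law:
  assumes "sets H = sets borel" and "sets Q = sets borel"
  shows "(\<lambda>p. sample_add n (fst p) (snd p))
           \<in> sample_law H n \<Otimes>\<^sub>M sample_law Q n \<rightarrow>\<^sub>M PiM {..<n} (\<lambda>_. borel)"
  using measurable_sample_add
  by (simp add: measurable_cong_sets[OF sets_pair_measure_cong[OF sets_sample_law[OF assms(1)] sets_sample_law[OF assms(2)]]])

lemma sample_law_convolution:
  assumes H: "prob_space H" and sH[measurable_cong]: "sets H = sets borel"
    and Q: "prob_space Q" and sQ[measurable_cong]: "sets Q = sets borel"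
  shows "sample_law (H \<star> Q) n = distr (sample_law H n \<Otimes>\<^sub>M sample_law Q n)
           (PiM {..<n} (\<lambda>_. borel)) (\<lambda>p. sample_add n (fst p) (snd p))"
    (is "_ = distr (?P \<Otimes>\<^sub>M ?W) ?B ?add")
proof -
  interpret H: product_sigma_finite "\<lambda>_. H"
    by (simp add: product_sigma_finite_def prob_space_imp_sigma_finite[OF H])
  interpret W: prob_space ?W by (rule prob_space_sample_law[OF Q])
  have HQ: "finite_measure (H \<star> Q)"
    by (rule convolution_finite) (use H Q sH sQ in \<open>auto intro: prob_space.finite_measure\<close>)
  interpret HQ: product_sigma_finite "\<lambda>_. H \<star> Q"
    by (simp add: product_sigma_finite_def finite_measure.sigma_finite_measure[OF HQ])
  note add = measurable_sample_add_sample_law[OF sH sQ]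
  have "distr (?P \<Otimes>\<^sub>M ?W) ?B ?add = PiM {..<n} (\<lambda>_. H \<star> Q)"
  proof (rule HQ.PiM_eqI)
    show "sets (distr (?P \<Otimes>\<^sub>M ?W) ?B ?add) = sets (PiM {..<n} (\<lambda>_. H \<star> Q))"
      unfolding sets_distr by (rule sets_PiM_cong) simp_all
  next
    fix A assume "\<And>i. i \<in> {..<n} \<Longrightarrow> A i \<in> sets (H \<star> Q)"
    then have A: "\<And>i. i < n \<Longrightarrow> A i \<in> sets borel" by simp
    then have box: "PiE {..<n} A \<in> sets ?B" by (intro sets_PiM_I_finite) auto
    define S where "S = ?add -` PiE {..<n} A \<inter> space (?P \<Otimes>\<^sub>M ?W)"
    have slice: "Pair x -` S = {w \<in> space ?W. sample_add n x w \<in> PiE {..<n} A}" if "x \<in> space ?P" for x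
      using that unfolding S_def space_pair_measure
      by (auto simp only: set_eq_iff vimage_eq Int_iff mem_Times_iff fst_conv snd_conv mem_Collect_eq)
    have "emeasure (distr (?P \<Otimes>\<^sub>M ?W) ?B ?add) (PiE {..<n} A) = emeasure (?P \<Otimes>\<^sub>M ?W) S"
      unfolding S_def by (rule emeasure_distr[OF add box])
    also have "\<dots> = (\<integral>\<^sup>+x. emeasure ?W (Pair x -` S) \<partial>?P)"
      by (rule W.emeasure_pair_measure_alt) (use add box in \<open>simp add: S_def measurable_sets\<close>)
    also have "\<dots> = (\<integral>\<^sup>+x. (\<Prod>i<n. \<integral>\<^sup>+s. indicator (A i) (x i + s) \<partial>Q) \<partial>?P)"
      by (rule nn_integral_cong) (simp add: slice emeasure_sample_add_preimage[OF Q sQ A])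
    also have "\<dots> = (\<Prod>i<n. \<integral>\<^sup>+y. \<integral>\<^sup>+s. indicator (A i) (y + s) \<partial>Q \<partial>H)"
      unfolding sample_law_def
    proof (rule H.product_nn_integral_prod)
      fix i assume "i \<in> {..<n}"
      with A have [measurable]: "A i \<in> sets borel" by simp
      show "(\<lambda>y. \<integral>\<^sup>+s. indicator (A i) (y + s) \<partial>Q) \<in> borel_measurable H"
        by (rule sigma_finite_measure.borel_measurable_nn_integral[OF prob_space_imp_sigma_finite[OF Q]])
           measurable
    qed simp
    also have "\<dots> = (\<Prod>i<n. emeasure (H \<star> Q) (A i))"
    proof (rule prod.cong[OF refl])
      fix i assume "i \<in> {..<n}"
      with A H Q sH sQ show "(\<integral>\<^sup>+y. \<integral>\<^sup>+s. indicator (A i) (y + s) \<partial>Q \<partial>H) = emeasure (H \<star> Q) (A i)"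
        by (intro convolution_emeasure'[symmetric]) (auto intro: prob_space.finite_measure)
    qed
    finally show "emeasure (distr (?P \<Otimes>\<^sub>M ?W) ?B ?add) (PiE {..<n} A)
        = (\<Prod>i\<in>{..<n}. emeasure (H \<star> Q) (A i))" by simp
  qed simp
  then show ?thesis unfolding sample_law_def by simp
qed

lemma pitman_var_le_convolution:
  assumes H: "square_integrable_law H" and HQ: "square_integrable_law (H \<star> Q)"
    and Q: "prob_space Q" and sQ: "sets Q = sets borel"
  shows "pitman_var H n \<le> pitman_var (H \<star> Q) n"
proof -
  have sH: "sets H = sets borel" and sHQ: "sets (H \<star> Q) = sets borel"
    using H by (auto simp: square_integrable_law_def)
  let ?P = "sample_law H n" and ?W = "sample_law Q n"
  interpret W: prob_space ?W by (rule prob_space_sample_law[OF Q])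
  interpret PW: pair_sigma_finite ?P ?W
    using H Q by (simp add: pair_sigma_finite_def prob_space_imp_sigma_finite prob_space_sample_law
                            square_integrable_law_def)
  interpret HQ: finite_measure_subalgebra "sample_law (H \<star> Q) n" "residual_algebra (H \<star> Q) n"
    using HQ by (intro finite_measure_subalgebra_residual_algebra) (auto simp: square_integrable_law_def)
  define t where "t = real_cond_exp (sample_law (H \<star> Q) n) (residual_algebra (H \<star> Q) n) (sample_mean n)"
  define \<phi> where "\<phi> y = ennreal ((sample_mean n y - t y)\<^sup>2)" for y
  have t_residual: "t \<in> borel_measurable (residual_algebra (H \<star> Q) n)" unfolding t_def by simp
  then have "t \<in> borel_measurable (PiM {..<n} (\<lambda>_. borel))"
    using measurable_from_subalg[OF HQ.subalg]
    by (simp add: measurable_cong_sets[OF sets_sample_law[OF sHQ] refl])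
  then have \<phi>: "\<phi> \<in> borel_measurable (PiM {..<n} (\<lambda>_. borel))" unfolding \<phi>_def by measurable
  note \<phi>_add = measurable_comp[OF measurable_sample_add_sample_law[OF sH sQ] \<phi>, unfolded comp_def]
  txt \<open>For fixed noise w, the optimal predictor for the convolution, evaluated at x + w and
    shifted by the mean of w, predicts the sample mean of x from its residuals.\<close>
  have shifted: "ennreal (pitman_var H n) \<le> (\<integral>\<^sup>+x. \<phi> (sample_add n x w) \<partial>?P)" for w
  proof -
    have "(\<lambda>x. t (sample_add n x w)) \<in> borel_measurable (residual_algebra H n)"
      using measurable_comp[OF measurable_sample_add_residual_algebra[OF sH sHQ] t_residual]
      by (simp add: comp_def)
    then have "(\<lambda>x. t (sample_add n x w) - sample_mean n w) \<in> borel_measurable (residual_algebra H n)"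
      by measurable
    from pitman_var_le_residual_predictor[OF H this] show ?thesis
      by (simp add: \<phi>_def sample_mean_sample_add algebra_simps)
  qed
  have "ennreal (pitman_var H n) = (\<integral>\<^sup>+w. ennreal (pitman_var H n) \<partial>?W)"
    by (simp add: W.emeasure_space_1)
  also have "\<dots> \<le> (\<integral>\<^sup>+w. \<integral>\<^sup>+x. \<phi> (sample_add n x w) \<partial>?P \<partial>?W)"
    by (intro nn_integral_mono shifted)
  also have "\<dots> = (\<integral>\<^sup>+p. \<phi> (sample_add n (fst p) (snd p)) \<partial>(?P \<Otimes>\<^sub>M ?W))"
    using PW.nn_integral_snd[OF \<phi>_add] by simp
  also have "\<dots> = (\<integral>\<^sup>+y. \<phi> y \<partial>sample_law (H \<star> Q) n)"
    using H Q sQ \<phi>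
    by (simp add: sample_law_convolution nn_integral_distr[OF measurable_sample_add_sample_law[OF sH sQ]]
                  square_integrable_law_def)
  also have "\<dots> = ennreal (pitman_var (H \<star> Q) n)"
    unfolding pitman_var_eq_nn_integral[OF HQ] \<phi>_def t_def ..
  finally show ?thesis using pitman_var_nonneg by (simp add: ennreal_le_iff)
qed

lemma distr_mult_convolution:
  fixes A B :: "real measure" and k :: real
  assumes sA: "sets A = sets borel" and B: "prob_space B" and sB: "sets B = sets borel"
  shows "distr (A \<star> B) borel (\<lambda>x. k * x) = (distr A borel (\<lambda>x. k * x) \<star> distr B borel (\<lambda>x. k * x))"
proof -
  have [measurable_cong]: "sets (A \<Otimes>\<^sub>M B) = sets (borel \<Otimes>\<^sub>M borel)"
    by (rule sets_pair_measure_cong[OF sA sB])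
  have mA: "(\<lambda>x::real. k * x) \<in> A \<rightarrow>\<^sub>M borel" and mB: "(\<lambda>x::real. k * x) \<in> B \<rightarrow>\<^sub>M borel"
    by (simp_all add: measurable_cong_sets[OF sA refl] measurable_cong_sets[OF sB refl])
  have sf: "sigma_finite_measure (distr B borel (\<lambda>x. k * x))"
    by (rule prob_space_imp_sigma_finite, rule prob_space.prob_space_distr[OF B mB])
  have "distr (A \<star> B) borel (\<lambda>x. k * x) = distr (A \<Otimes>\<^sub>M B) borel ((\<lambda>x. k * x) \<circ> (\<lambda>(x, y). x + y))"
    unfolding convolution_def by (rule distr_distr) measurable
  also have "\<dots> = distr (A \<Otimes>\<^sub>M B) borel ((\<lambda>(x, y). x + y) \<circ> (\<lambda>(x, y). (k * x, k * y)))"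
    by (rule distr_cong) (auto simp: algebra_simps)
  also have "\<dots> = distr (distr (A \<Otimes>\<^sub>M B) (borel \<Otimes>\<^sub>M borel) (\<lambda>(x, y). (k * x, k * y))) borel (\<lambda>(x, y). x + y)"
    by (rule distr_distr[symmetric]) measurable
  also have "distr (A \<Otimes>\<^sub>M B) (borel \<Otimes>\<^sub>M borel) (\<lambda>(x, y). (k * x, k * y))
      = distr A borel (\<lambda>x. k * x) \<Otimes>\<^sub>M distr B borel (\<lambda>x. k * x)"
    by (rule pair_measure_distr[OF mA mB sf, symmetric])
  finally show ?thesis unfolding convolution_def .
qed

lemma (in prob_space) distr_add_scaled_indep:
  fixes X Y :: "'a \<Rightarrow> real"
  assumes [measurable]: "X \<in> borel_measurable M" "Y \<in> borel_measurable M"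
    and "indep_var borel X borel Y"
  shows "distr M borel (\<lambda>\<omega>. X \<omega> + t * Y \<omega>) = (distr M borel X \<star> distr M borel (\<lambda>\<omega>. t * Y \<omega>))"
proof -
  have "indep_var borel (id \<circ> X) borel ((\<lambda>y. t * y) \<circ> Y)"
    by (rule indep_var_compose[OF assms(3)]) simp_all
  then have "indep_var borel X borel (\<lambda>\<omega>. t * Y \<omega>)" by (simp add: comp_def)
  then show ?thesis by (rule sum_indep_random_variable) auto
qed

lemma (in prob_space) distr_add_scaled_decompose:
  fixes X Y :: "'a \<Rightarrow> real"
  assumes [measurable]: "X \<in> borel_measurable M" "Y \<in> borel_measurable M"
    and "indep_var borel X borel Y"
    and Q: "prob_space Q" and sQ: "sets Q = sets borel"
    and Y_law: "distr M borel Y = (distr (distr M borel Y) borel (\<lambda>y. c * y) \<star> Q)"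
  shows "distr M borel (\<lambda>\<omega>. X \<omega> + k * Y \<omega>) =
         (distr M borel (\<lambda>\<omega>. X \<omega> + (c * k) * Y \<omega>) \<star> distr Q borel (\<lambda>x. k * x))"
proof -
  have scaled: "distr M borel (\<lambda>\<omega>. t * Y \<omega>) = distr (distr M borel Y) borel (\<lambda>y. t * y)" for t
    by (subst distr_distr) (auto simp: comp_def)
  have "distr M borel (\<lambda>\<omega>. k * Y \<omega>)
      = distr (distr (distr M borel Y) borel (\<lambda>y. c * y) \<star> Q) borel (\<lambda>x. k * x)"
    unfolding scaled by (subst Y_law) (rule refl)
  also have "\<dots> = (distr (distr M borel (\<lambda>\<omega>. c * Y \<omega>)) borel (\<lambda>x. k * x) \<star> distr Q borel (\<lambda>x. k * x))"
    unfolding scaled by (rule distr_mult_convolution[OF _ Q sQ]) simp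
  also have "distr (distr M borel (\<lambda>\<omega>. c * Y \<omega>)) borel (\<lambda>x. k * x) = distr M borel (\<lambda>\<omega>. (c * k) * Y \<omega>)"
    by (subst distr_distr) (auto simp: comp_def mult_ac)
  finally have kY: "distr M borel (\<lambda>\<omega>. k * Y \<omega>)
      = (distr M borel (\<lambda>\<omega>. (c * k) * Y \<omega>) \<star> distr Q borel (\<lambda>x. k * x))" .
  have "(\<lambda>x. k * x) \<in> Q \<rightarrow>\<^sub>M borel" by (simp add: measurable_cong_sets[OF sQ refl])
  then have "finite_measure (distr Q borel (\<lambda>x. k * x))"
    by (intro prob_space.finite_measure prob_space.prob_space_distr[OF Q])
  moreover have "finite_measure (distr M borel X)" "finite_measure (distr M borel (\<lambda>\<omega>. (c * k) * Y \<omega>))"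
    by (rule prob_space.finite_measure, rule prob_space_distr, simp)+
  ultimately show ?thesis
    unfolding distr_add_scaled_indep[OF assms(1-3)] kY
    by (intro convolution_associative) simp_all
qed

lemma (in prob_space) square_integrable_law_add_scaled:
  fixes X Y :: "'a \<Rightarrow> real"
  assumes [measurable]: "X \<in> borel_measurable M" "Y \<in> borel_measurable M"
    and "integrable M (\<lambda>\<omega>. (X \<omega>)\<^sup>2)" and "integrable M (\<lambda>\<omega>. (Y \<omega>)\<^sup>2)"
  shows "square_integrable_law (distr M borel (\<lambda>\<omega>. X \<omega> + t * Y \<omega>))"
proof -
  have "integrable M (\<lambda>\<omega>. (X \<omega> + t * Y \<omega>)\<^sup>2)"
    by (rule square_integrable_add) (use assms in \<open>simp_all add: power_mult_distrib\<close>)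
  then show ?thesis
    unfolding square_integrable_law_def by (simp add: prob_space_distr integrable_distr_eq)
qed

lemma (in prob_space) pitman_var_add_scaled_mono:
  fixes X Y :: "'a \<Rightarrow> real"
  assumes [measurable]: "X \<in> borel_measurable M" "Y \<in> borel_measurable M"
    and "indep_var borel X borel Y"
    and "integrable M (\<lambda>\<omega>. (X \<omega>)\<^sup>2)" and "integrable M (\<lambda>\<omega>. (Y \<omega>)\<^sup>2)"
    and "self_decomposable (distr M borel Y)"
    and c: "0 < c" "c \<le> 1"
  shows "pitman_var (distr M borel (\<lambda>\<omega>. X \<omega> + (c * k) * Y \<omega>)) n
           \<le> pitman_var (distr M borel (\<lambda>\<omega>. X \<omega> + k * Y \<omega>)) n"
proof (cases "c = 1")
  case False
  with c obtain Q where Q: "prob_space Q" "sets Q = sets borel"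
    and Y_law: "distr M borel Y = (distr (distr M borel Y) borel (\<lambda>y. c * y) \<star> Q)"
    using assms(6) unfolding self_decomposable_def by force
  have "prob_space (distr Q borel (\<lambda>x. k * x))"
    using Q by (intro prob_space.prob_space_distr) (auto simp: measurable_cong_sets[OF Q(2) refl])
  moreover have "square_integrable_law (distr M borel (\<lambda>\<omega>. X \<omega> + (c * k) * Y \<omega>))"
    "square_integrable_law (distr M borel (\<lambda>\<omega>. X \<omega> + k * Y \<omega>))"
    using assms(1-5) by (simp_all add: square_integrable_law_add_scaled)
  ultimately show ?thesis
    unfolding distr_add_scaled_decompose[OF assms(1-3) Q Y_law, of k]
    by (intro pitman_var_le_convolution) simp_all
qed simp

theorem theorem5:
  fixes M :: "'a measure" and X Y :: "'a \<Rightarrow> real" and n :: nat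
  assumes "prob_space M"
    and "X \<in> borel_measurable M" and "Y \<in> borel_measurable M"
    and "prob_space.indep_var M borel X borel Y"
    and "integrable M (\<lambda>\<omega>. (X \<omega>)\<^sup>2)" and "integrable M (\<lambda>\<omega>. (Y \<omega>)\<^sup>2)"
    and "self_decomposable (distr M borel Y)"
    and "n \<ge> 1"
  shows "(\<forall>a b. 0 < a \<longrightarrow> a \<le> b \<longrightarrow>
            pitman_var (distr M borel (\<lambda>\<omega>. X \<omega> + a * Y \<omega>)) n
              \<le> pitman_var (distr M borel (\<lambda>\<omega>. X \<omega> + b * Y \<omega>)) n) \<and>
         (\<forall>a b. a \<le> b \<longrightarrow> b < 0 \<longrightarrow>
            pitman_var (distr M borel (\<lambda>\<omega>. X \<omega> + a * Y \<omega>)) n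
              \<ge> pitman_var (distr M borel (\<lambda>\<omega>. X \<omega> + b * Y \<omega>)) n)"
proof (intro conjI allI impI)
  note mono = prob_space.pitman_var_add_scaled_mono[OF assms(1-7)]
  fix a b :: real assume "0 < a" "a \<le> b"
  then have "0 < a / b" "a / b \<le> 1" "a / b * b = a" by (simp_all add: field_simps)
  with mono[of "a / b" b n]
  show "pitman_var (distr M borel (\<lambda>\<omega>. X \<omega> + a * Y \<omega>)) n
          \<le> pitman_var (distr M borel (\<lambda>\<omega>. X \<omega> + b * Y \<omega>)) n" by (simp only:)
next
  note mono = prob_space.pitman_var_add_scaled_mono[OF assms(1-7)]
  fix a b :: real assume "a \<le> b" "b < 0"
  then have "0 < b / a" "b / a \<le> 1" "b / a * a = b" by (simp_all add: field_simps)
  with mono[of "b / a" a n]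
  show "pitman_var (distr M borel (\<lambda>\<omega>. X \<omega> + a * Y \<omega>)) n
          \<ge> pitman_var (distr M borel (\<lambda>\<omega>. X \<omega> + b * Y \<omega>)) n" by (simp only:)
qed

end
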